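(* Fix a sampler time $t\in(0,1]$, step size $\delta_t>0$, noise level $\sigma_t>0$, a state $x_t\in\mathbb{R}^d$ and context $c$. Let $\mu_t(v)=U_t+B_t v$ be the one-step mean as a function of a velocity $v\in\mathbb{R}^d$, where $U_t$ does not depend on $v$ and $B_t=-\delta_t-(1-t)\frac{\sigma_t^2\delta_t}{2t}$ is a scalar, and let $\Sigma_t$ be a fixed symmetric positive definite covariance. Let $v^{\mathrm{old}}\in\mathbb{R}^d$ be a fixed (rollout) velocity not depending on $\theta$, let $v_\theta=v_\theta(x_t,t,c)$ be a differentiable parametric velocity, let $\beta>0$, $\Delta v_\theta=v_\theta-v^{\mathrm{old}}$, $v^{\pm}_\theta=v^{\mathrm{old}}\pm\beta\Delta v_\theta$, $\mu^{\mathrm{old}}_t=\mu_t(v^{\mathrm{old}})$, $\mu^{\pm}_{\theta,t}=\mu_t(v^\pm_\theta)$. For an observed next state $x_{t^-}$ let $E^{\pm}_{\theta,t}=\|x_{t^-}-\mu^\pm_{\theta,t}\|^2_{\Sigma_t^{-1}}$, $e_t=x_{t^-}-\mu^{\mathrm{old}}_t$, $d_t=\mu^+_{\theta,t}-\mu^{\mathrm{old}}_t$. Let $r\in[0,1]$, $y=2r-1$, $z_t=\tfrac12 y(E^+_{\theta,t}-E^-_{\theta,t})$ and $\ell_t(\theta)=\mathrm{softplus}(z_t)$. (a) $E^+_{\theta,t}-E^-_{\theta,t}=-4\langle\Sigma_t^{-1}e_t,d_t\rangle$. (b) $-\nabla_\theta\ell_t(\theta)=2\beta\,\sigma(z_t)\,y\,\big(\tfrac{\partial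 v_\theta}{\partial\theta}\big)^\top B_t\Sigma_t^{-1}e_t$; in particular $-\nabla_\theta\ell_t(\theta)\propto\sigma(z_t)\,y\,\big(\tfrac{\partial v_\theta}{\partial\theta}\big)^\top B_t\Sigma_t^{-1}e_t$, where $\sigma$ is the logistic sigmoid. (c) Suppose now $x_{t^-}$ and $r$ are random given $(x_t,c)$, that $r=o\in\{0,1\}$ is a binary outcome with $\alpha(x_t,c)=\mathbb{P}(o=1\mid x_t,c)$, that $\mu^{\mathrm{old}}_t=\mathbb{E}[x_{t^-}\mid x_t,c]$, and define $\mu^{\pm}_t(x_t,c)=\mathbb{E}[x_{t^-}\mid x_t,c,o=1]$ resp. $\mathbb{E}[x_{t^-}\mid x_t,c,o=0]$ and $\Delta\mu^\star_t(x_t,c)=\mu^+_t-\mu^-_t$. In the small-update regime in which $\sigma(z_t)$ is treated as a constant (as when $v_\theta\approx v^{\mathrm{old}}$), the conditional expected update direction is parallel to the oracle mean gap direction: $$\mathbb{E}[-\nabla_\theta\ell_t(\theta)\mid x_t,c]\ \parallel\ \Big(\frac{\partial v_\theta}{\partial\theta}\Big)^\top B_t\Sigma_t^{-1}\Delta\mu^\star_t(x_t,c).$$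
   Context: $\|u\|^2_M=u^\top Mu$, $\langle\cdot,\cdot\rangle$ is the Euclidean inner product, $\mathrm{softplus}(z)=\log(1+e^z)$, $\sigma(z)=1/(1+e^{-z})$. Gradients with respect to $\theta$ treat $v^{\mathrm{old}}$, $\mu^{\mathrm{old}}_t$, $e_t$ and $x_{t^-}$ as constants. The affine mean arises from the Euler–Maruyama step of a flow-matching reverse SDE $x_{t^-}=x_t-\big[v+\frac{\sigma_t^2}{2t}(x_t+(1-t)v)\big]\delta_t+\sigma_t\sqrt{\delta_t}\,\epsilon$, $\epsilon\sim\mathcal{N}(0,I)$, with $t^-=t-\delta_t$; $U_t=(1-\frac{\sigma_t^2\delta_t}{2t})x_t$. "Parallel" means equal up to a (nonnegative) scalar factor. *)

theory Defs
  imports "HOL-Probability.Probability"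
begin

definition softplus :: "real \<Rightarrow> real" where
  "softplus z = ln (1 + exp z)"

definition sigmoid :: "real \<Rightarrow> real" where
  "sigmoid z = 1 / (1 + exp (- z))"

definition wnorm2 :: "real^'n^'n \<Rightarrow> real^'n \<Rightarrow> real" where
  "wnorm2 A u = u \<bullet> (A *v u)"

definition spd :: "real^'n^'n \<Rightarrow> bool" where
  "spd S \<longleftrightarrow> transpose S = S \<and> (\<forall>u. u \<noteq> 0 \<longrightarrow> u \<bullet> (S *v u) > 0)"

definition Bcoef :: "real \<Rightarrow> real \<Rightarrow> real \<Rightarrow> real" where
  "Bcoef t dt sg = - dt - (1 - t) * (sg\<^sup>2 * dt / (2 * t))"

definition Ucoef :: "real \<Rightarrow> real \<Rightarrow> real \<Rightarrow> real^'n \<Rightarrow> real^'n" where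
  "Ucoef t dt sg x = (1 - sg\<^sup>2 * dt / (2 * t)) *\<^sub>R x"

definition mu_step :: "real \<Rightarrow> real \<Rightarrow> real \<Rightarrow> real^'n \<Rightarrow> real^'n \<Rightarrow> real^'n" where
  "mu_step t dt sg x v = Ucoef t dt sg x + Bcoef t dt sg *\<^sub>R v"

definition cond_mean :: "'a measure \<Rightarrow> ('a \<Rightarrow> real^'n) \<Rightarrow> 'a set \<Rightarrow> real^'n" where
  "cond_mean M X A = (1 / measure M A) *\<^sub>R (\<integral>\<omega>. indicator A \<omega> *\<^sub>R X \<omega> \<partial>M)"

end

theory Submission
  imports Defs
begin

(* The one-step mean is affine in the velocity with scalar slope B, so the residuals of the two
   perturbed means are e -+ w with w = d, and polarisation for the symmetric form Sigma^-1 gives (a).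
   Consequently z is linear in v_theta - v_old, z = <-2 y B beta Sigma^-1 e, v_theta - v_old>, and the
   chain rule with softplus' = sigmoid gives (b). For (c), once sigmoid(z) is frozen to a constant the
   expected update is a fixed linear image of E[(2o - 1)(x - E x)], and for a binary outcome o with
   P(o = 1) = p this covariance equals 2 p (1 - p) (mu+ - mu-). *)

lemma spd_imp_invertible:
  fixes S :: "real^'n^'n"
  assumes "spd S"
  shows "invertible S"
proof -
  have "S *v u = 0 \<Longrightarrow> u = 0" for u
    using assms unfolding spd_def by (metis inner_zero_right less_irrefl)
  then show ?thesis
    using matrix_left_invertible_ker invertible_left_inverse by metis
qed

lemma matrix_mul_matrix_inv:
  fixes A :: "'a::semiring_1^'n^'n"
  assumes "invertible A"
  shows "A ** matrix_inv A = mat 1"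
  using someI_ex[OF assms[unfolded invertible_def]] unfolding matrix_inv_def by auto

lemma matrix_inv_symmetric:
  fixes S :: "'a::comm_semiring_1^'n^'n"
  assumes "invertible S" "transpose S = S"
  shows "transpose (matrix_inv S) = matrix_inv S"
proof -
  have "transpose (matrix_inv S) ** S = mat 1"
    by (metis assms(2) matrix_mul_matrix_inv[OF assms(1)] matrix_transpose_mul transpose_mat)
  then show ?thesis
    by (metis matrix_mul_matrix_inv[OF assms(1)] matrix_mul_assoc matrix_mul_lid matrix_mul_rid)
qed

lemma inner_symmetric_matrix:
  fixes S :: "real^'n^'n"
  assumes "transpose S = S"
  shows "u \<bullet> (S *v w) = (S *v u) \<bullet> w"
  by (metis assms dot_lmul_matrix transpose_matrix_vector)

lemma wnorm2_diff_add:
  fixes S :: "real^'n^'n"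
  assumes "transpose S = S"
  shows "wnorm2 S (e - w) - wnorm2 S (e + w) = - 4 * ((S *v e) \<bullet> w)"
  using inner_symmetric_matrix[OF assms, of e w]
  unfolding wnorm2_def by (simp add: algebra_simps inner_commute)

lemma mu_step_diff:
  "mu_step t dt sg x v - mu_step t dt sg x w = Bcoef t dt sg *\<^sub>R (v - w)"
  unfolding mu_step_def by (simp add: scaleR_diff_right)

lemma wnorm2_gap_mu_step:
  fixes S :: "real^'n^'n"
  assumes "transpose S = S"
  shows "wnorm2 S (xm - mu_step t dt sg x (v + u)) - wnorm2 S (xm - mu_step t dt sg x (v - u))
    = - 4 * ((S *v (xm - mu_step t dt sg x v)) \<bullet> (mu_step t dt sg x (v + u) - mu_step t dt sg x v))"
proof -
  let ?e = "xm - mu_step t dt sg x v" and ?w = "Bcoef t dt sg *\<^sub>R u"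
  have shift: "mu_step t dt sg x (v + u) - mu_step t dt sg x v = ?w"
    using mu_step_diff[of t dt sg x "v + u" v] by simp
  moreover have "xm - mu_step t dt sg x (v + u) = ?e - ?w" "xm - mu_step t dt sg x (v - u) = ?e + ?w"
    using shift mu_step_diff[of t dt sg x "v - u" v] by (simp_all add: algebra_simps)
  ultimately show ?thesis
    by (simp only:) (rule wnorm2_diff_add[OF assms])
qed

lemma softplus_has_real_derivative: "(softplus has_real_derivative sigmoid z) (at z)"
proof -
  have "exp z / (1 + exp z) = sigmoid z"
    unfolding sigmoid_def by (simp add: exp_minus field_simps add_pos_pos)
  then show ?thesis
    unfolding softplus_def[abs_def] by (auto intro!: derivative_eq_intros simp: add_pos_pos)
qed

lemma has_derivative_softplus_inner:
  fixes f :: "real^'p \<Rightarrow> real^'n" and J :: "real^'p^'n"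
  assumes "(f has_derivative (\<lambda>h. J *v h)) (at x)"
  shows "((\<lambda>\<theta>. softplus (a \<bullet> f \<theta>)) has_derivative
           (\<lambda>h. (sigmoid (a \<bullet> f x) *\<^sub>R (transpose J *v a)) \<bullet> h)) (at x)"
  using has_derivative_compose[OF has_derivative_inner_right[OF assms]
      has_field_derivative_imp_has_derivative[OF softplus_has_real_derivative]]
  by (simp add: dot_lmul_matrix mult.commute)

lemma has_derivative_preference_loss:
  fixes t dt sg y \<beta> :: real and x xm vold :: "real^'d" and S :: "real^'d^'d"
    and v :: "real^'p \<Rightarrow> real^'d" and J :: "real^'p^'d"
  assumes S: "transpose S = S" and v: "(v has_derivative (\<lambda>h. J *v h)) (at \<theta>0)"
  defines "z \<equiv> \<lambda>\<theta>. 1/2 * y * (wnorm2 S (xm - mu_step t dt sg x (vold + \<beta> *\<^sub>R (v \<theta> - vold)))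
                        - wnorm2 S (xm - mu_step t dt sg x (vold - \<beta> *\<^sub>R (v \<theta> - vold))))"
  shows "((\<lambda>\<theta>. softplus (z \<theta>)) has_derivative (\<lambda>h. (- ((2 * \<beta> * sigmoid (z \<theta>0) * y) *\<^sub>R
           (transpose J *v (Bcoef t dt sg *\<^sub>R (S *v (xm - mu_step t dt sg x vold)))))) \<bullet> h)) (at \<theta>0)"
proof -
  define a where "a = (- 2 * y * Bcoef t dt sg * \<beta>) *\<^sub>R (S *v (xm - mu_step t dt sg x vold))"
  have z: "z \<theta> = a \<bullet> (v \<theta> - vold)" for \<theta>
    unfolding z_def a_def wnorm2_gap_mu_step[OF S] mu_step_diff by (simp add: algebra_simps)
  have grad: "- ((2 * \<beta> * sigmoid (a \<bullet> (v \<theta>0 - vold)) * y) *\<^sub>R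
        (transpose J *v (Bcoef t dt sg *\<^sub>R (S *v (xm - mu_step t dt sg x vold)))))
      = sigmoid (a \<bullet> (v \<theta>0 - vold)) *\<^sub>R (transpose J *v a)"
    unfolding a_def by (simp only: matrix_vector_mult_scaleR scaleR_scaleR) simp
  show ?thesis
    unfolding z grad using has_derivative_diff[OF v has_derivative_const]
    by (intro has_derivative_softplus_inner) simp
qed

(* No positivity of measure M A is needed: on a null set both sides are 0. *)
lemma integral_indicator_scaleR_eq_cond_mean:
  fixes X :: "'a \<Rightarrow> real^'n"
  assumes "finite_measure M" "A \<in> sets M" "integrable M X"
  shows "(\<integral>\<omega>. indicator A \<omega> *\<^sub>R X \<omega> \<partial>M) = measure M A *\<^sub>R cond_mean M X A"
proof (cases "measure M A = 0")
  case True
  then have "A \<in> null_sets M"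
    using assms by (simp add: finite_measure.emeasure_eq_measure null_sets_def)
  then have "(\<integral>\<omega>. indicator A \<omega> *\<^sub>R X \<omega> \<partial>M) = 0"
    by (intro integral_eq_zero_AE) (auto dest: AE_not_in elim: eventually_mono)
  with True show ?thesis by simp
qed (simp add: cond_mean_def)

lemma (in finite_measure) integral_indicator_scaleR_centered:
  fixes X :: "'a \<Rightarrow> real^'n"
  assumes "A \<in> sets M" "integrable M X"
  shows "(\<integral>\<omega>. indicator A \<omega> *\<^sub>R (X \<omega> - c) \<partial>M) = measure M A *\<^sub>R (cond_mean M X A - c)"
proof -
  have "integrable M (\<lambda>\<omega>. indicator A \<omega> *\<^sub>R c)"
    using assms(1) by (intro integrable_mult_indicator) auto
  then have "(\<integral>\<omega>. indicator A \<omega> *\<^sub>R (X \<omega> - c) \<partial>M)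
      = (\<integral>\<omega>. indicator A \<omega> *\<^sub>R X \<omega> \<partial>M) - (\<integral>\<omega>. indicator A \<omega> *\<^sub>R c \<partial>M)"
    using assms by (simp add: scaleR_diff_right integrable_mult_indicator)
  also have "\<dots> = measure M A *\<^sub>R cond_mean M X A - measure M A *\<^sub>R c"
    using assms integral_indicator_scaleR_eq_cond_mean[OF finite_measure_axioms assms]
    by (simp add: emeasure_eq_measure)
  finally show ?thesis by (simp add: scaleR_diff_right)
qed

lemma (in prob_space) integral_signed_binary_centered:
  fixes X :: "'a \<Rightarrow> real^'n"
  assumes X: "integrable M X"
    and Ob: "Ob \<in> borel_measurable M" "\<forall>\<omega>\<in>space M. Ob \<omega> \<in> {0, 1}"
  defines "A1 \<equiv> {\<omega> \<in> space M. Ob \<omega> = 1}" and "A0 \<equiv> {\<omega> \<in> space M. Ob \<omega> = 0}"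
  shows "integrable M (\<lambda>\<omega>. (2 * Ob \<omega> - 1) *\<^sub>R (X \<omega> - expectation X))"
    and "(\<integral>\<omega>. (2 * Ob \<omega> - 1) *\<^sub>R (X \<omega> - expectation X) \<partial>M)
      = (2 * prob A1 * prob A0) *\<^sub>R (cond_mean M X A1 - cond_mean M X A0)"
proof -
  define m where "m = expectation X"
  have A: "A1 \<in> sets M" "A0 \<in> sets M"
    unfolding A1_def A0_def using Ob(1) by measurable
  have split: "indicator A1 \<omega> + indicator A0 \<omega> = (1::real)"
    and sign: "2 * Ob \<omega> - 1 = indicator A1 \<omega> - indicator A0 \<omega>" if "\<omega> \<in> space M" for \<omega>
    using Ob(2) that unfolding A1_def A0_def by (auto simp: indicator_def)
  have integrand: "(2 * Ob \<omega> - 1) *\<^sub>R (X \<omega> - m)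
      = indicator A1 \<omega> *\<^sub>R (X \<omega> - m) - indicator A0 \<omega> *\<^sub>R (X \<omega> - m)" if "\<omega> \<in> space M" for \<omega>
    using sign[OF that] by (simp add: scaleR_diff_left)
  have int_parts: "integrable M (\<lambda>\<omega>. indicator A \<omega> *\<^sub>R (X \<omega> - m))" if "A \<in> sets M" for A
    using X that by (intro integrable_mult_indicator) auto
  show "integrable M (\<lambda>\<omega>. (2 * Ob \<omega> - 1) *\<^sub>R (X \<omega> - expectation X))"
    unfolding m_def[symmetric] using int_parts[OF A(1)] int_parts[OF A(2)]
    by (subst Bochner_Integration.integrable_cong[OF refl integrand]) auto
  have "m = (\<integral>\<omega>. indicator A1 \<omega> *\<^sub>R X \<omega> + indicator A0 \<omega> *\<^sub>R X \<omega> \<partial>M)"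
    unfolding m_def by (intro Bochner_Integration.integral_cong) (auto simp flip: scaleR_add_left simp: split)
  also have "\<dots> = prob A1 *\<^sub>R cond_mean M X A1 + prob A0 *\<^sub>R cond_mean M X A0"
    using A X by (simp add: integrable_mult_indicator integral_indicator_scaleR_eq_cond_mean)
  finally have m: "m = prob A1 *\<^sub>R cond_mean M X A1 + prob A0 *\<^sub>R cond_mean M X A0" .
  have "A1 \<union> A0 = space M" "A1 \<inter> A0 = {}"
    using Ob(2) unfolding A1_def A0_def by auto
  then have q: "prob A0 = 1 - prob A1"
    using finite_measure_Union[OF A] prob_space by simp
  have "(\<integral>\<omega>. (2 * Ob \<omega> - 1) *\<^sub>R (X \<omega> - m) \<partial>M)
      = prob A1 *\<^sub>R (cond_mean M X A1 - m) - prob A0 *\<^sub>R (cond_mean M X A0 - m)"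
    using A int_parts
    by (simp add: Bochner_Integration.integral_cong[OF refl integrand] integral_indicator_scaleR_centered X)
  also have "\<dots> = (2 * prob A1 * prob A0) *\<^sub>R (cond_mean M X A1 - cond_mean M X A0)"
  proof -
    have "cond_mean M X A1 - m = prob A0 *\<^sub>R (cond_mean M X A1 - cond_mean M X A0)"
      and "cond_mean M X A0 - m = - prob A1 *\<^sub>R (cond_mean M X A1 - cond_mean M X A0)"
      unfolding m q by (simp_all add: algebra_simps)
    then show ?thesis by (simp add: scaleR_left_distrib[symmetric])
  qed
  finally show "(\<integral>\<omega>. (2 * Ob \<omega> - 1) *\<^sub>R (X \<omega> - expectation X) \<partial>M)
      = (2 * prob A1 * prob A0) *\<^sub>R (cond_mean M X A1 - cond_mean M X A0)"
    unfolding m_def .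
qed

lemma (in prob_space) integral_signed_binary_linear_parallel:
  fixes X :: "'a \<Rightarrow> real^'n" and L :: "real^'n \<Rightarrow> 'b::{banach, second_countable_topology}"
  assumes X: "integrable M X"
    and Ob: "Ob \<in> borel_measurable M" "\<forall>\<omega>\<in>space M. Ob \<omega> \<in> {0, 1}"
    and L: "bounded_linear L" and c: "0 \<le> c"
  shows "\<exists>k\<ge>0. (\<integral>\<omega>. (c * (2 * Ob \<omega> - 1)) *\<^sub>R L (X \<omega> - expectation X) \<partial>M)
    = k *\<^sub>R L (cond_mean M X {\<omega> \<in> space M. Ob \<omega> = 1} - cond_mean M X {\<omega> \<in> space M. Ob \<omega> = 0})"
proof -
  let ?p = "prob {\<omega> \<in> space M. Ob \<omega> = 1}" and ?q = "prob {\<omega> \<in> space M. Ob \<omega> = 0}"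
  let ?Y = "\<lambda>\<omega>. (2 * Ob \<omega> - 1) *\<^sub>R (X \<omega> - expectation X)"
  have scale: "L (a *\<^sub>R u) = a *\<^sub>R L u" for a u
    by (rule linear_scale[OF bounded_linear.linear[OF L]])
  have "(\<integral>\<omega>. (c * (2 * Ob \<omega> - 1)) *\<^sub>R L (X \<omega> - expectation X) \<partial>M)
      = (\<integral>\<omega>. L (c *\<^sub>R ?Y \<omega>) \<partial>M)"
    by (simp add: scale)
  also have "\<dots> = L (\<integral>\<omega>. c *\<^sub>R ?Y \<omega> \<partial>M)"
    using integral_signed_binary_centered(1)[OF X Ob]
    by (intro integral_bounded_linear L integrable_scaleR_right)
  also have "\<dots> = (c * (2 * ?p * ?q)) *\<^sub>R
      L (cond_mean M X {\<omega> \<in> space M. Ob \<omega> = 1} - cond_mean M X {\<omega> \<in> space M. Ob \<omega> = 0})"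
    by (simp only: integral_scaleR_right integral_signed_binary_centered(2)[OF X Ob] scale) simp
  finally show ?thesis
    using c by (intro exI[of _ "c * (2 * ?p * ?q)"]) auto
qed

theorem theorem4p4:
  fixes t dt sg \<beta> r s :: real
    and x xm vold :: "real^'d"
    and Sig :: "real^'d^'d"
    and v :: "real^'p \<Rightarrow> real^'d"
    and \<theta>0 :: "real^'p"
    and J :: "real^'p^'d"
    and M :: "'a measure"
    and X :: "'a \<Rightarrow> real^'d"
    and Ob :: "'a \<Rightarrow> real"
  assumes t: "0 < t" "t \<le> 1"
    and dt: "0 < dt" and sg: "0 < sg"
    and Sig: "spd Sig"
    and beta: "0 < \<beta>"
    and vdiff: "(v has_derivative (\<lambda>h. J *v h)) (at \<theta>0)"
    and r: "0 \<le> r" "r \<le> 1"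
    and M: "prob_space M"
    and Xmeas: "X \<in> borel_measurable M" and Xint: "integrable M X"
    and Omeas: "Ob \<in> borel_measurable M"
    and Obin: "\<forall>\<omega>\<in>space M. Ob \<omega> \<in> {0, 1}"
    and Xmean: "(\<integral>\<omega>. X \<omega> \<partial>M) = mu_step t dt sg x vold"
    and s: "0 < s"
  shows
   "let B = Bcoef t dt sg;
        Si = matrix_inv Sig;
        mu = mu_step t dt sg x;
        vp = (\<lambda>\<theta>. vold + \<beta> *\<^sub>R (v \<theta> - vold));
        vm = (\<lambda>\<theta>. vold - \<beta> *\<^sub>R (v \<theta> - vold));
        Ep = (\<lambda>\<theta>. wnorm2 Si (xm - mu (vp \<theta>)));
        Em = (\<lambda>\<theta>. wnorm2 Si (xm - mu (vm \<theta>)));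
        e = xm - mu vold;
        d = (\<lambda>\<theta>. mu (vp \<theta>) - mu vold);
        y = 2 * r - 1;
        z = (\<lambda>\<theta>. 1/2 * y * (Ep \<theta> - Em \<theta>));
        loss = (\<lambda>\<theta>. softplus (z \<theta>));
        negGrad = (2 * \<beta> * sigmoid (z \<theta>0) * y) *\<^sub>R (transpose J *v (B *\<^sub>R (Si *v e)));
        A1 = {\<omega> \<in> space M. Ob \<omega> = 1};
        A0 = {\<omega> \<in> space M. Ob \<omega> = 0};
        dmu = cond_mean M X A1 - cond_mean M X A0;
        G = (\<lambda>\<omega>. (2 * \<beta> * s * (2 * Ob \<omega> - 1)) *\<^sub>R
                    (transpose J *v (B *\<^sub>R (Si *v (X \<omega> - mu vold)))))
    in (\<forall>\<theta>. Ep \<theta> - Em \<theta> = - 4 * ((Si *v e) \<bullet> d \<theta>))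
     \<and> (loss has_derivative (\<lambda>h. (- negGrad) \<bullet> h)) (at \<theta>0)
     \<and> (\<exists>k>0. negGrad = k *\<^sub>R ((sigmoid (z \<theta>0) * y) *\<^sub>R (transpose J *v (B *\<^sub>R (Si *v e)))))
     \<and> (\<exists>k\<ge>0. (\<integral>\<omega>. G \<omega> \<partial>M) = k *\<^sub>R (transpose J *v (B *\<^sub>R (Si *v dmu))))"
proof -
  have Si: "transpose (matrix_inv Sig) = matrix_inv Sig"
    using Sig by (simp add: spd_def matrix_inv_symmetric spd_imp_invertible)
  have L: "bounded_linear (\<lambda>u. transpose J *v (Bcoef t dt sg *\<^sub>R (matrix_inv Sig *v u)))"
    by (intro bounded_linear_compose[OF matrix_vector_mul_bounded_linear]
        bounded_linear_compose[OF bounded_linear_scaleR_right] matrix_vector_mul_bounded_linear)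
  have par: "\<exists>k>0. (2 * \<beta> * a * b) *\<^sub>R w = k *\<^sub>R ((a * b) *\<^sub>R w)" for a b and w :: "real^'p"
    using beta by (intro exI[of _ "2 * \<beta>"]) auto
  have c: "0 \<le> 2 * \<beta> * s"
    using beta s by simp
  show ?thesis
    unfolding Let_def
    using wnorm2_gap_mu_step[OF Si] has_derivative_preference_loss[OF Si vdiff] par
      prob_space.integral_signed_binary_linear_parallel[OF M Xint Omeas Obin L c, unfolded Xmean]
    by blast
qed

end
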